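(* Let $e$ be a term, let $I,\tilde I$ be interpretations with $I=\tilde I$ on $\Sigma(e)$, and let $v,\tilde v$ be states with $v\downarrow CN(e)=\tilde v\downarrow CN(e)$ on $FV(e)$. Then $Iv[\![e]\!]=\tilde I\tilde v[\![e]\!]$. Moreover, $FV(e)$ and $CN(e)$ are the smallest sets with this property. That is, suppose $S\subseteq\mathcal V$ and $D\subseteq\Omega$ are such that for all $I$, $v$, $\tilde v$ with $v\downarrow D=\tilde v\downarrow D$ on $S$ we have $Iv[\![e]\!]=I\tilde v[\![e]\!]$. Then $FV(e)\subseteq S$ and $CN(e)\subseteq D$.
   Context: Setting (dLCHP). Variables and channels. Variables are $\mathcal V=\mathcal V_{\mathbb R}\cup\mathcal V_{\mathbb N}\cup\mathcal V_{\mathcal T}$ (real, integer and trace variables). Each $x\in\mathcal V_{\mathbb R}$ has a differential symbol $x'\in\mathcal V_{\mathbb R}$. The variable $\mu\in\mathcal V_{\mathbb R}$ is the designated global time. $\Omega$ is the set of channel names. All channel sets and variable sets occurring in the syntax are finite or cofinite. $S^\complement$ denotes the complement of $S$. Syntax of terms. Terms have four sorts: - real terms $\theta::=x\mid f(\bar{ch},\bar e)\mid\theta_1+\theta_2\mid\theta_1\cdot\theta_2\mid(\eta)'\mid\mathrm{val}(te)\mid\mathrm{time}(te)$; - integer terms $\iota::=n\mid f(\bar{ch},\bar e)\mid\iota_1+\iota_2\mid|te|$; - channel terms $f(\bar{ch},\bar e)\mid\mathrm{chan}(te)$; - trace terms $te::=h\mid f(\bar{ch},\bar e)\mid\langle ch,\eta_1,\eta_2\rangle\mid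 te_1\cdot te_2\mid te\downarrow C\mid te[\iota]$. Here $\eta,\eta_i$ are polynomials with rational coefficients in real variables. $f(\bar{ch},\bar e)$ is a function symbol (including constants) annotated with a channel set $\bar{ch}\subseteq\Omega$ and applied to terms $\bar e$. Operators such as $+,\cdot,\downarrow C$ are built-in. Traces and states. - A trace is a finite sequence of events $\langle ch,d,s\rangle$ with $ch\in\Omega$, $d\in\mathbb R$ (value) and $s\in\mathbb R$ (timestamp), with strictly increasing timestamps. - A state $v$ maps each variable to a value of its type (real, natural number or trace). $v[z\mapsto d]$ is the modified state. - $\tau\downarrow C$ is the subsequence of events whose channel lies in $C$. - $v\downarrow C$ replaces $v(h)$ by $v(h)\downarrow C$ for every $h\in\mathcal V_{\mathcal T}$. - "$v\downarrow D=\tilde v\downarrow D$ on $S$" means that $v\downarrow D$ and $\tilde v\downarrow D$ agree on every variable in $S$. Interpretations. An interpretation $I$ assigns to function symbols functions of matching sorts (smooth in real arguments if real-valued) and to predicate symbols relations. Term semantics. - Variables: $Iv[\![z]\!]=v(z)$. - Function symbols: $Iv[\![f(\bar{ch},e_1,\dots,e_k)]\!]=I(f)(I\tilde v[\![e_1]\!],\dots,I\tilde v[\![e_k]\!])$ where $\tilde v=v\downarrow\bar{ch}$. - Built-ins (sum, product, $\mathrm{val}$, $\mathrm{time}$, $\mathrm{chan}$, length, concatenation, projection, indexing, communication items) are evaluated pointwise. - Differentials: $Iv[\![(\eta)']\!]=\sum_x v(x')\,\partial Iv[\![\eta]\!]/\partial x$. Static semantics. - $FV(e)$ is the set of $z\in\mathcal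 V$ such that some $I,v,\tilde v$ with $v=\tilde v$ on $\{z\}^\complement$ satisfy $Iv[\![e]\!]\ne I\tilde v[\![e]\!]$. - $CN(e)$ is the set of $ch\in\Omega$ such that some $I,v,\tilde v$ with $v\downarrow\{ch\}^\complement=\tilde v\downarrow\{ch\}^\complement$ satisfy $Iv[\![e]\!]\ne I\tilde v[\![e]\!]$. - $\Sigma(e)$ is the set of function symbols occurring in $e$. *)

theory Defs
  imports "HOL-Analysis.Analysis"
begin

type_synonym ident = string
type_synonym chan = string

text \<open>Real variables: base variables and differential symbols x' (for every real variable).\<close>
datatype rvar = RBase ident | Dif rvar

definition mu :: rvar where "mu = RBase ''mu''"   \<comment> \<open>designated global time\<close>

datatype var = RV rvar | NV ident | TV ident

type_synonym event = "chan \<times> real \<times> real"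
type_synonym trace = "event list"

definition ev_chan :: "event \<Rightarrow> chan" where "ev_chan ev = fst ev"
definition ev_val :: "event \<Rightarrow> real" where "ev_val ev = fst (snd ev)"
definition ev_time :: "event \<Rightarrow> real" where "ev_time ev = snd (snd ev)"

definition chrono :: "trace \<Rightarrow> bool" where
  "chrono \<tau> = sorted_wrt (\<lambda>a b. ev_time a < ev_time b) \<tau>"

definition tproj :: "trace \<Rightarrow> chan set \<Rightarrow> trace" where
  "tproj \<tau> C = filter (\<lambda>ev. ev_chan ev \<in> C) \<tau>"

datatype srt = SR | SN | SC | ST

datatype dval = Rval real | Nval nat | Cval chan | Tval trace

fun sort_of :: "dval \<Rightarrow> srt" where
  "sort_of (Rval _) = SR" | "sort_of (Nval _) = SN" | "sort_of (Cval _) = SC" | "sort_of (Tval _) = ST"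

fun the_R :: "dval \<Rightarrow> real" where "the_R (Rval r) = r" | "the_R _ = 0"
fun the_N :: "dval \<Rightarrow> nat" where "the_N (Nval n) = n" | "the_N _ = 0"
fun the_C :: "dval \<Rightarrow> chan" where "the_C (Cval c) = c" | "the_C _ = ''''"
fun the_T :: "dval \<Rightarrow> trace" where "the_T (Tval t) = t" | "the_T _ = []"

record state =
  rs :: "rvar \<Rightarrow> real"
  ns :: "ident \<Rightarrow> nat"
  ts :: "ident \<Rightarrow> trace"

definition is_state :: "state \<Rightarrow> bool" where
  "is_state v = (\<forall>h. chrono (ts v h))"

fun lookup :: "state \<Rightarrow> var \<Rightarrow> dval" where
  "lookup v (RV x) = Rval (rs v x)"
| "lookup v (NV n) = Nval (ns v n)"
| "lookup v (TV h) = Tval (ts v h)"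

definition sproj :: "state \<Rightarrow> chan set \<Rightarrow> state" where
  "sproj v C = v\<lparr>ts := (\<lambda>h. tproj (ts v h) C)\<rparr>"

definition agree :: "state \<Rightarrow> state \<Rightarrow> var set \<Rightarrow> bool" where
  "agree v w S = (\<forall>z\<in>S. lookup v z = lookup w z)"

datatype fsym = FSym (fname: ident) (fargs: "srt list") (fres: srt)

datatype poly = PVar rvar | PConst rat | PAdd poly poly | PMul poly poly

datatype rtm = RVarT rvar | RFun fsym "chan set" "trm list" | RPlus rtm rtm | RTimes rtm rtm
  | RDiff poly | Val ttm | Time ttm
and ntm = NVarT ident | NFun fsym "chan set" "trm list" | NPlus ntm ntm | Len ttm
and ctm = CFun fsym "chan set" "trm list" | Chan ttm
and ttm = TVarT ident | TFun fsym "chan set" "trm list" | Comm chan poly poly | Cat ttm ttm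
  | Proj ttm "chan set" | At ttm ntm
and trm = AR rtm | AN ntm | AC ctm | AT ttm

fun tsort :: "trm \<Rightarrow> srt" where
  "tsort (AR _) = SR" | "tsort (AN _) = SN" | "tsort (AC _) = SC" | "tsort (AT _) = ST"

definition fincof :: "chan set \<Rightarrow> bool" where
  "fincof C = (finite C \<or> finite (- C))"

fun wf_r :: "rtm \<Rightarrow> bool" and wf_n :: "ntm \<Rightarrow> bool" and wf_c :: "ctm \<Rightarrow> bool"
  and wf_t :: "ttm \<Rightarrow> bool" and wf_a :: "trm \<Rightarrow> bool" where
  "wf_r (RVarT x) = True"
| "wf_r (RFun f C as) = (fres f = SR \<and> map tsort as = fargs f \<and> fincof C \<and> (\<forall>a\<in>set as. wf_a a))"
| "wf_r (RPlus a b) = (wf_r a \<and> wf_r b)"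
| "wf_r (RTimes a b) = (wf_r a \<and> wf_r b)"
| "wf_r (RDiff p) = True"
| "wf_r (Val te) = wf_t te"
| "wf_r (Time te) = wf_t te"
| "wf_n (NVarT n) = True"
| "wf_n (NFun f C as) = (fres f = SN \<and> map tsort as = fargs f \<and> fincof C \<and> (\<forall>a\<in>set as. wf_a a))"
| "wf_n (NPlus a b) = (wf_n a \<and> wf_n b)"
| "wf_n (Len te) = wf_t te"
| "wf_c (CFun f C as) = (fres f = SC \<and> map tsort as = fargs f \<and> fincof C \<and> (\<forall>a\<in>set as. wf_a a))"
| "wf_c (Chan te) = wf_t te"
| "wf_t (TVarT h) = True"
| "wf_t (TFun f C as) = (fres f = ST \<and> map tsort as = fargs f \<and> fincof C \<and> (\<forall>a\<in>set as. wf_a a))"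
| "wf_t (Comm ch p q) = True"
| "wf_t (Cat a b) = (wf_t a \<and> wf_t b)"
| "wf_t (Proj te C) = (fincof C \<and> wf_t te)"
| "wf_t (At te i) = (wf_t te \<and> wf_n i)"
| "wf_a (AR t) = wf_r t"
| "wf_a (AN t) = wf_n t"
| "wf_a (AC t) = wf_c t"
| "wf_a (AT t) = wf_t t"

fun sig_r :: "rtm \<Rightarrow> fsym set" and sig_n :: "ntm \<Rightarrow> fsym set" and sig_c :: "ctm \<Rightarrow> fsym set"
  and sig_t :: "ttm \<Rightarrow> fsym set" and sig_a :: "trm \<Rightarrow> fsym set" where
  "sig_r (RVarT x) = {}"
| "sig_r (RFun f C as) = insert f (\<Union>a\<in>set as. sig_a a)"
| "sig_r (RPlus a b) = sig_r a \<union> sig_r b"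
| "sig_r (RTimes a b) = sig_r a \<union> sig_r b"
| "sig_r (RDiff p) = {}"
| "sig_r (Val te) = sig_t te"
| "sig_r (Time te) = sig_t te"
| "sig_n (NVarT n) = {}"
| "sig_n (NFun f C as) = insert f (\<Union>a\<in>set as. sig_a a)"
| "sig_n (NPlus a b) = sig_n a \<union> sig_n b"
| "sig_n (Len te) = sig_t te"
| "sig_c (CFun f C as) = insert f (\<Union>a\<in>set as. sig_a a)"
| "sig_c (Chan te) = sig_t te"
| "sig_t (TVarT h) = {}"
| "sig_t (TFun f C as) = insert f (\<Union>a\<in>set as. sig_a a)"
| "sig_t (Comm ch p q) = {}"
| "sig_t (Cat a b) = sig_t a \<union> sig_t b"
| "sig_t (Proj te C) = sig_t te"
| "sig_t (At te i) = sig_t te \<union> sig_n i"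
| "sig_a (AR t) = sig_r t"
| "sig_a (AN t) = sig_n t"
| "sig_a (AC t) = sig_c t"
| "sig_a (AT t) = sig_t t"

type_synonym interp = "fsym \<Rightarrow> dval list \<Rightarrow> dval"

text \<open>Smoothness (C-infinity) of a function of k real arguments, given on real lists of
  length k: all iterated partial derivatives exist and are continuous.\<close>
definition pd :: "nat \<Rightarrow> (real list \<Rightarrow> real) \<Rightarrow> real list \<Rightarrow> real" where
  "pd i g xs = deriv (\<lambda>r. g (xs[i := r])) (xs ! i)"

fun iter_pd :: "nat list \<Rightarrow> (real list \<Rightarrow> real) \<Rightarrow> real list \<Rightarrow> real" where
  "iter_pd [] g = g"
| "iter_pd (i # js) g = pd i (iter_pd js g)"

definition cont_list :: "nat \<Rightarrow> (real list \<Rightarrow> real) \<Rightarrow> bool" where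
  "cont_list k g = (\<forall>xs. length xs = k \<longrightarrow> (\<forall>\<epsilon>>0. \<exists>\<delta>>0. \<forall>ys. length ys = k \<and>
      (\<forall>i<k. \<bar>ys ! i - xs ! i\<bar> < \<delta>) \<longrightarrow> \<bar>g ys - g xs\<bar> < \<epsilon>))"

definition smooth_list :: "nat \<Rightarrow> (real list \<Rightarrow> real) \<Rightarrow> bool" where
  "smooth_list k g = (\<forall>js. set js \<subseteq> {..<k} \<longrightarrow> cont_list k (iter_pd js g) \<and>
      (\<forall>i<k. \<forall>xs. length xs = k \<longrightarrow> (\<lambda>r. iter_pd js g (xs[i := r])) differentiable (at (xs ! i))))"

fun nreals :: "dval list \<Rightarrow> nat" where
  "nreals [] = 0"
| "nreals (Rval _ # vs) = Suc (nreals vs)"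
| "nreals (_ # vs) = nreals vs"

fun fill :: "dval list \<Rightarrow> real list \<Rightarrow> dval list" where
  "fill [] ys = []"
| "fill (Rval r # vs) (y # ys) = Rval y # fill vs ys"
| "fill (Rval r # vs) [] = Rval r # fill vs []"
| "fill (v # vs) ys = v # fill vs ys"

definition is_interp :: "interp \<Rightarrow> bool" where
  "is_interp I = (\<forall>f vs. map sort_of vs = fargs f \<longrightarrow>
      sort_of (I f vs) = fres f \<and>
      (fres f = SR \<longrightarrow> smooth_list (nreals vs) (\<lambda>ys. the_R (I f (fill vs ys)))))"

definition interp_agree :: "interp \<Rightarrow> interp \<Rightarrow> fsym set \<Rightarrow> bool" where
  "interp_agree I J F = (\<forall>f\<in>F. \<forall>vs. map sort_of vs = fargs f \<longrightarrow> I f vs = J f vs)"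

fun pvars :: "poly \<Rightarrow> rvar set" where
  "pvars (PVar x) = {x}" | "pvars (PConst c) = {}"
| "pvars (PAdd p q) = pvars p \<union> pvars q" | "pvars (PMul p q) = pvars p \<union> pvars q"

fun peval :: "(rvar \<Rightarrow> real) \<Rightarrow> poly \<Rightarrow> real" where
  "peval r (PVar x) = r x" | "peval r (PConst c) = of_rat c"
| "peval r (PAdd p q) = peval r p + peval r q" | "peval r (PMul p q) = peval r p * peval r q"

text \<open>val, time, chan refer to the last event of a trace (defaults for the empty trace);
  te[i] is the singleton trace of the i-th event (0-based), empty if out of range.\<close>
definition tval :: "trace \<Rightarrow> real" where "tval \<tau> = (if \<tau> = [] then 0 else ev_val (last \<tau>))"
definition ttime :: "trace \<Rightarrow> real" where "ttime \<tau> = (if \<tau> = [] then 0 else ev_time (last \<tau>))"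
definition tchan :: "trace \<Rightarrow> chan" where "tchan \<tau> = (if \<tau> = [] then '''' else ev_chan (last \<tau>))"
definition tat :: "trace \<Rightarrow> nat \<Rightarrow> trace" where "tat \<tau> i = (if i < length \<tau> then [\<tau> ! i] else [])"

fun rsem :: "interp \<Rightarrow> state \<Rightarrow> rtm \<Rightarrow> real"
  and nsem :: "interp \<Rightarrow> state \<Rightarrow> ntm \<Rightarrow> nat"
  and csem :: "interp \<Rightarrow> state \<Rightarrow> ctm \<Rightarrow> chan"
  and tsem :: "interp \<Rightarrow> state \<Rightarrow> ttm \<Rightarrow> trace"
  and asem :: "interp \<Rightarrow> state \<Rightarrow> trm \<Rightarrow> dval" where
  "rsem I v (RVarT x) = rs v x"
| "rsem I v (RFun f C as) = the_R (I f (map (asem I (sproj v C)) as))"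
| "rsem I v (RPlus a b) = rsem I v a + rsem I v b"
| "rsem I v (RTimes a b) = rsem I v a * rsem I v b"
| "rsem I v (RDiff p) = (\<Sum>x\<in>pvars p. rs v (Dif x) * deriv (\<lambda>r. peval ((rs v)(x := r)) p) (rs v x))"
| "rsem I v (Val te) = tval (tsem I v te)"
| "rsem I v (Time te) = ttime (tsem I v te)"
| "nsem I v (NVarT n) = ns v n"
| "nsem I v (NFun f C as) = the_N (I f (map (asem I (sproj v C)) as))"
| "nsem I v (NPlus a b) = nsem I v a + nsem I v b"
| "nsem I v (Len te) = length (tsem I v te)"
| "csem I v (CFun f C as) = the_C (I f (map (asem I (sproj v C)) as))"
| "csem I v (Chan te) = tchan (tsem I v te)"
| "tsem I v (TVarT h) = ts v h"
| "tsem I v (TFun f C as) = the_T (I f (map (asem I (sproj v C)) as))"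
| "tsem I v (Comm ch p q) = [(ch, peval (rs v) p, peval (rs v) q)]"
| "tsem I v (Cat a b) = tsem I v a @ tsem I v b"
| "tsem I v (Proj te C) = tproj (tsem I v te) C"
| "tsem I v (At te i) = tat (tsem I v te) (nsem I v i)"
| "asem I v (AR t) = Rval (rsem I v t)"
| "asem I v (AN t) = Nval (nsem I v t)"
| "asem I v (AC t) = Cval (csem I v t)"
| "asem I v (AT t) = Tval (tsem I v t)"

definition FV :: "trm \<Rightarrow> var set" where
  "FV e = {z. \<exists>I v w. is_interp I \<and> is_state v \<and> is_state w \<and> agree v w (- {z})
              \<and> asem I v e \<noteq> asem I w e}"

definition CN :: "trm \<Rightarrow> chan set" where
  "CN e = {ch. \<exists>I v w. is_interp I \<and> is_state v \<and> is_state w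
              \<and> sproj v (- {ch}) = sproj w (- {ch}) \<and> asem I v e \<noteq> asem I w e}"

definition Sigma :: "trm \<Rightarrow> fsym set" where
  "Sigma e = sig_a e"

end

theory Submission
  imports Defs
begin

text \<open>A term coincides on states agreeing on the finitely many variables occurring in it.
  Since FV and CN are defined semantically by changing a single variable or a single channel,
  agreement on FV is reached from agreement on the occurring variables by changing the finitely
  many occurring variables outside FV one at a time, each change being invisible. Likewise only
  finitely many channels occur in the traces of the occurring trace variables, and projecting away
  each of them that lies outside CN is invisible.\<close>

lemma finite_pvars: "finite (pvars p)"
  by (induction p) auto

lemma peval_cong: "(\<And>x. x \<in> pvars p \<Longrightarrow> r x = s x) \<Longrightarrow> peval r p = peval s p"
  by (induction p) auto

fun vars_r :: "rtm \<Rightarrow> var set" and vars_n :: "ntm \<Rightarrow> var set" and vars_c :: "ctm \<Rightarrow> var set"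
  and vars_t :: "ttm \<Rightarrow> var set" and vars_a :: "trm \<Rightarrow> var set" where
  "vars_r (RVarT x) = {RV x}"
| "vars_r (RFun f C as) = (\<Union>a\<in>set as. vars_a a)"
| "vars_r (RPlus a b) = vars_r a \<union> vars_r b"
| "vars_r (RTimes a b) = vars_r a \<union> vars_r b"
| "vars_r (RDiff p) = RV ` pvars p \<union> RV ` Dif ` pvars p"
| "vars_r (Val te) = vars_t te"
| "vars_r (Time te) = vars_t te"
| "vars_n (NVarT n) = {NV n}"
| "vars_n (NFun f C as) = (\<Union>a\<in>set as. vars_a a)"
| "vars_n (NPlus a b) = vars_n a \<union> vars_n b"
| "vars_n (Len te) = vars_t te"
| "vars_c (CFun f C as) = (\<Union>a\<in>set as. vars_a a)"
| "vars_c (Chan te) = vars_t te"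
| "vars_t (TVarT h) = {TV h}"
| "vars_t (TFun f C as) = (\<Union>a\<in>set as. vars_a a)"
| "vars_t (Comm ch p q) = RV ` (pvars p \<union> pvars q)"
| "vars_t (Cat a b) = vars_t a \<union> vars_t b"
| "vars_t (Proj te C) = vars_t te"
| "vars_t (At te i) = vars_t te \<union> vars_n i"
| "vars_a (AR t) = vars_r t"
| "vars_a (AN t) = vars_n t"
| "vars_a (AC t) = vars_c t"
| "vars_a (AT t) = vars_t t"

lemma finite_vars:
  "finite (vars_r r)" "finite (vars_n n)" "finite (vars_c c)" "finite (vars_t t)" "finite (vars_a a)"
  by (induction r and n and c and t and a rule: vars_r_vars_n_vars_c_vars_t_vars_a.induct)
     (auto simp: finite_pvars)

lemma agree_refl: "agree v v S"
  by (simp add: agree_def)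

lemma agree_mono: "agree v w S \<Longrightarrow> T \<subseteq> S \<Longrightarrow> agree v w T"
  unfolding agree_def by blast

lemma agree_sproj: "agree v w S \<Longrightarrow> agree (sproj v C) (sproj w C) S"
  unfolding agree_def sproj_def
proof clarify
  fix z assume "z \<in> S" and "\<forall>z\<in>S. lookup v z = lookup w z"
  then show "lookup (v\<lparr>ts := \<lambda>h. tproj (ts v h) C\<rparr>) z =
      lookup (w\<lparr>ts := \<lambda>h. tproj (ts w h) C\<rparr>) z"
    by (cases z) auto
qed

lemma agreeD:
  assumes "agree v w S"
  shows "RV x \<in> S \<Longrightarrow> rs v x = rs w x" "NV n \<in> S \<Longrightarrow> ns v n = ns w n"
    "TV h \<in> S \<Longrightarrow> ts v h = ts w h"
  using assms unfolding agree_def by (metis dval.inject lookup.simps)+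

lemma sproj_sproj: "sproj (sproj v C) D = sproj v (C \<inter> D)"
  by (simp add: sproj_def tproj_def)

lemma is_state_sproj: "is_state v \<Longrightarrow> is_state (sproj v C)"
  by (simp add: is_state_def sproj_def tproj_def chrono_def sorted_wrt_filter)

lemma map_asem_sproj_cong:
  assumes IH: "\<And>a. a \<in> set as \<Longrightarrow>
      \<forall>w. agree (sproj v C) w (vars_a a) \<longrightarrow> asem I (sproj v C) a = asem I w a"
    and "agree v w (\<Union>a\<in>set as. vars_a a)"
  shows "map (asem I (sproj v C)) as = map (asem I (sproj w C)) as"
proof (rule map_cong[OF refl])
  fix a assume a: "a \<in> set as"
  then have "agree (sproj v C) (sproj w C) (vars_a a)"
    using assms(2) agree_sproj agree_mono by blast
  then show "asem I (sproj v C) a = asem I (sproj w C) a"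
    using IH[OF a] by blast
qed

lemma rsem_RDiff_cong:
  assumes "agree v w (vars_r (RDiff p))"
  shows "rsem I v (RDiff p) = rsem I w (RDiff p)"
proof -
  have base: "rs v x = rs w x" and dif: "rs v (Dif x) = rs w (Dif x)" if "x \<in> pvars p" for x
    using agreeD(1)[OF assms] that by auto
  have "peval ((rs v)(x := r)) p = peval ((rs w)(x := r)) p" if "x \<in> pvars p" for x r
    by (rule peval_cong) (simp add: base)
  then show ?thesis
    by (simp add: base dif cong: sum.cong)
qed

lemma asem_coincide_vars:
  "\<forall>w. agree v w (vars_r r) \<longrightarrow> rsem I v r = rsem I w r"
  "\<forall>w. agree v w (vars_n n) \<longrightarrow> nsem I v n = nsem I w n"
  "\<forall>w. agree v w (vars_c c) \<longrightarrow> csem I v c = csem I w c"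
  "\<forall>w. agree v w (vars_t t) \<longrightarrow> tsem I v t = tsem I w t"
  "\<forall>w. agree v w (vars_a a) \<longrightarrow> asem I v a = asem I w a"
proof (induction I v r and I v n and I v c and I v t and I v a
    rule: rsem_nsem_csem_tsem_asem.induct)
  case (2 I v f C as)
  show ?case
    using map_asem_sproj_cong[of as v C I, OF "2.IH"] by (simp del: map_eq_conv)
next
  case (5 I v p) then show ?case using rsem_RDiff_cong by blast
next
  case (9 I v f C as)
  show ?case
    using map_asem_sproj_cong[of as v C I, OF "9.IH"] by (simp del: map_eq_conv)
next
  case (12 I v f C as)
  show ?case
    using map_asem_sproj_cong[of as v C I, OF "12.IH"] by (simp del: map_eq_conv)
next
  case (15 I v f C as)
  show ?case
    using map_asem_sproj_cong[of as v C I, OF "15.IH"] by (simp del: map_eq_conv)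
next
  case (16 I v ch p q) then show ?case by (auto intro!: peval_cong dest: agreeD)
qed (auto dest: agreeD, (metis agree_mono sup_ge1 sup_ge2)+)

lemma sort_of_asem: "sort_of (asem I v a) = tsort a"
  by (cases a) auto

lemma interp_agree_mono: "interp_agree I J G \<Longrightarrow> F \<subseteq> G \<Longrightarrow> interp_agree I J F"
  unfolding interp_agree_def by blast

lemma interp_agree_Un: "interp_agree I J (A \<union> B) \<longleftrightarrow> interp_agree I J A \<and> interp_agree I J B"
  unfolding interp_agree_def by blast

lemma fun_app_interp_cong:
  assumes args: "\<And>a. a \<in> set as \<Longrightarrow>
      wf_a a \<longrightarrow> interp_agree I J (sig_a a) \<longrightarrow> asem I u a = asem J u a"
    and agree: "interp_agree I J (insert f (\<Union>a\<in>set as. sig_a a))"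
    and sorts: "map tsort as = fargs f" and wf: "\<forall>a\<in>set as. wf_a a"
  shows "I f (map (asem I u) as) = J f (map (asem J u) as)"
proof -
  have "asem I u a = asem J u a" if "a \<in> set as" for a
    using args[OF that] wf that interp_agree_mono[OF agree] by blast
  then have same_args: "map (asem I u) as = map (asem J u) as"
    by simp
  have "map sort_of (map (asem J u) as) = fargs f"
    using sorts by (simp add: sort_of_asem comp_def)
  then show ?thesis
    using agree unfolding same_args interp_agree_def by blast
qed

text \<open>Well-formedness is needed because interp_agree compares interpretations only on
  arguments of the declared sorts.\<close>

lemma asem_coincide_interp:
  "wf_r r \<longrightarrow> interp_agree I J (sig_r r) \<longrightarrow> rsem I v r = rsem J v r"
  "wf_n n \<longrightarrow> interp_agree I J (sig_n n) \<longrightarrow> nsem I v n = nsem J v n"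
  "wf_c c \<longrightarrow> interp_agree I J (sig_c c) \<longrightarrow> csem I v c = csem J v c"
  "wf_t t \<longrightarrow> interp_agree I J (sig_t t) \<longrightarrow> tsem I v t = tsem J v t"
  "wf_a a \<longrightarrow> interp_agree I J (sig_a a) \<longrightarrow> asem I v a = asem J v a"
proof (induction I v r and I v n and I v c and I v t and I v a
    rule: rsem_nsem_csem_tsem_asem.induct)
  case (2 I v f C as)
  then show ?case using fun_app_interp_cong[of as I J "sproj v C" f] by simp
next
  case (9 I v f C as)
  then show ?case using fun_app_interp_cong[of as I J "sproj v C" f] by simp
next
  case (12 I v f C as)
  then show ?case using fun_app_interp_cong[of as I J "sproj v C" f] by simp
next
  case (15 I v f C as)
  then show ?case using fun_app_interp_cong[of as I J "sproj v C" f] by simp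
qed (auto simp: interp_agree_Un)

fun copy_var :: "state \<Rightarrow> state \<Rightarrow> var \<Rightarrow> state" where
  "copy_var a b (RV x) = a\<lparr>rs := (rs a)(x := rs b x)\<rparr>"
| "copy_var a b (NV n) = a\<lparr>ns := (ns a)(n := ns b n)\<rparr>"
| "copy_var a b (TV h) = a\<lparr>ts := (ts a)(h := ts b h)\<rparr>"

lemma is_state_copy_var: "is_state a \<Longrightarrow> is_state b \<Longrightarrow> is_state (copy_var a b z)"
  by (cases z) (auto simp: is_state_def)

lemma lookup_copy_var: "lookup (copy_var a b z) y = (if y = z then lookup b z else lookup a y)"
  by (cases z; cases y) auto

lemma asem_cong_outside_FV:
  assumes "z \<notin> FV e" "is_interp I" "is_state a" "is_state b" "agree a b (- {z})"
  shows "asem I a e = asem I b e"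
  using assms unfolding FV_def by blast

lemma asem_agree_vars_diff_FV:
  assumes I: "is_interp I" and F: "finite F" and "F \<inter> FV e = {}"
    and "is_state a" "is_state b" "agree a b (vars_a e - F)"
  shows "asem I a e = asem I b e"
  using F assms(3-)
proof (induction F arbitrary: a)
  case empty
  then show ?case using asem_coincide_vars(5) by auto
next
  case (insert z F)
  let ?c = "copy_var a b z"
  have c: "is_state ?c"
    using insert.prems is_state_copy_var by blast
  have "asem I a e = asem I ?c e"
    using insert.prems
    by (intro asem_cong_outside_FV[OF _ I _ c]) (auto simp: agree_def lookup_copy_var)
  also have "\<dots> = asem I b e"
    using insert.IH[OF _ c] insert.prems by (auto simp: agree_def lookup_copy_var)
  finally show ?case .
qed

lemma asem_agree_FV:
  assumes "is_interp I" "is_state a" "is_state b" "agree a b (FV e)"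
  shows "asem I a e = asem I b e"
proof (rule asem_agree_vars_diff_FV[OF assms(1) _ _ assms(2,3)])
  show "finite (vars_a e - FV e)"
    using finite_vars(5) by blast
  show "agree a b (vars_a e - (vars_a e - FV e))"
    using assms(4) agree_mono by blast
qed blast

definition trace_chans :: "state \<Rightarrow> var set \<Rightarrow> chan set" where
  "trace_chans v X = (\<Union>h\<in>{h. TV h \<in> X}. ev_chan ` set (ts v h))"

lemma finite_trace_chans: "finite X \<Longrightarrow> finite (trace_chans v X)"
  unfolding trace_chans_def
  by (rule finite_UN_I) (auto intro: finite_vimageI simp: inj_def vimage_def[symmetric])

lemma agree_sproj_trace_chans:
  assumes "trace_chans v X \<subseteq> D"
  shows "agree v (sproj v D) X"
  unfolding agree_def
proof
  fix z assume "z \<in> X"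
  with assms show "lookup v z = lookup (sproj v D) z"
    by (cases z) (auto simp: trace_chans_def sproj_def tproj_def intro!: filter_True[symmetric])
qed

lemma asem_cong_outside_CN:
  assumes "ch \<notin> CN e" "is_interp I" "is_state a" "is_state b"
    and "sproj a (- {ch}) = sproj b (- {ch})"
  shows "asem I a e = asem I b e"
  using assms unfolding CN_def by blast

lemma asem_sproj_CN_if_trace_chans:
  assumes I: "is_interp I" and G: "finite G"
    and "is_state a" "trace_chans a (vars_a e) \<subseteq> CN e \<union> G"
  shows "asem I a e = asem I (sproj a (CN e)) e"
  using G assms(3-)
proof (induction G arbitrary: a)
  case empty
  then show ?case using asem_coincide_vars(5) agree_sproj_trace_chans by simp
next
  case (insert ch G)
  show ?case
  proof (cases "ch \<in> CN e")
    case True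
    then show ?thesis using insert by auto
  next
    case False
    let ?c = "sproj a (- {ch})"
    have c: "is_state ?c"
      using insert.prems is_state_sproj by blast
    have "asem I a e = asem I ?c e"
      using False I insert.prems c by (intro asem_cong_outside_CN) (auto simp: sproj_sproj)
    also have "\<dots> = asem I (sproj ?c (CN e)) e"
      using insert.IH[OF c] insert.prems(2) insert.hyps(2)
      by (auto simp: trace_chans_def sproj_def tproj_def)
    also have "sproj ?c (CN e) = sproj a (CN e)"
      using False by (simp add: sproj_sproj Int_absorb1)
    finally show ?thesis .
  qed
qed

lemma asem_sproj_CN:
  assumes "is_interp I" "is_state a"
  shows "asem I a e = asem I (sproj a (CN e)) e"
proof (rule asem_sproj_CN_if_trace_chans[OF assms(1) _ assms(2)])
  show "finite (trace_chans a (vars_a e) - CN e)"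
    using finite_trace_chans[OF finite_vars(5)] by blast
qed auto

lemma FV_minimal:
  assumes "\<forall>I v w. is_interp I \<and> is_state v \<and> is_state w \<and> agree (sproj v D) (sproj w D) S
             \<longrightarrow> asem I v e = asem I w e"
  shows "FV e \<subseteq> S"
proof
  fix z assume "z \<in> FV e"
  then obtain I v w where "is_interp I" "is_state v" "is_state w" "agree v w (- {z})"
      "asem I v e \<noteq> asem I w e"
    unfolding FV_def by blast
  moreover have "agree v w S" if "z \<notin> S"
    using \<open>agree v w (- {z})\<close> agree_mono that by blast
  ultimately show "z \<in> S"
    using assms agree_sproj by blast
qed

lemma CN_minimal:
  assumes "\<forall>I v w. is_interp I \<and> is_state v \<and> is_state w \<and> agree (sproj v D) (sproj w D) S
             \<longrightarrow> asem I v e = asem I w e"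
  shows "CN e \<subseteq> D"
proof
  fix ch assume "ch \<in> CN e"
  then obtain I v w where w: "is_interp I" "is_state v" "is_state w"
      "sproj v (- {ch}) = sproj w (- {ch})" "asem I v e \<noteq> asem I w e"
    unfolding CN_def by blast
  show "ch \<in> D"
  proof (rule ccontr)
    assume "ch \<notin> D"
    then have "- {ch} \<inter> D = D"
      by blast
    then have "sproj v D = sproj w D"
      using w(4) sproj_sproj by metis
    then show False
      using assms w agree_refl by metis
  qed
qed

theorem lemma2:
  fixes e :: trm
  assumes "wf_a e"
  shows "(\<forall>I J v w. is_interp I \<and> is_interp J \<and> is_state v \<and> is_state w
            \<and> interp_agree I J (Sigma e)
            \<and> agree (sproj v (CN e)) (sproj w (CN e)) (FV e)
            \<longrightarrow> asem I v e = asem J w e)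
       \<and> (\<forall>S D. (\<forall>I v w. is_interp I \<and> is_state v \<and> is_state w
                    \<and> agree (sproj v D) (sproj w D) S \<longrightarrow> asem I v e = asem I w e)
                \<longrightarrow> FV e \<subseteq> S \<and> CN e \<subseteq> D)"
proof (intro conjI allI impI)
  fix I J v w
  assume h: "is_interp I \<and> is_interp J \<and> is_state v \<and> is_state w
            \<and> interp_agree I J (Sigma e)
            \<and> agree (sproj v (CN e)) (sproj w (CN e)) (FV e)"
  then have "asem I v e = asem I (sproj v (CN e)) e"
    using asem_sproj_CN by blast
  also have "\<dots> = asem I (sproj w (CN e)) e"
    using h asem_agree_FV is_state_sproj by blast
  also have "\<dots> = asem I w e"
    using h asem_sproj_CN by metis
  also have "\<dots> = asem J w e"
    using h asem_coincide_interp(5) assms unfolding Sigma_def by blast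
  finally show "asem I v e = asem J w e" .
qed (use FV_minimal CN_minimal in blast)+

end
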